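(* Let $\mu$ be a Borel probability measure on $\mathbb{R}^d$ with $\operatorname{spt}(\mu)\subseteq[0,1]^d$. If $\mathcal{Z}(\mu)\neq\emptyset$, then $\operatorname{spt}(\mu)\subseteq[0,1]^d\setminus(0,1)^d$.
   Context: $\operatorname{spt}(\mu)$ is the support of $\mu$ (smallest closed set of full measure). $\widehat{\mu}(\xi)=\int e^{-2\pi i\xi\cdot x}d\mu(x)$ and $\mathcal{Z}(\mu)=\{\xi\in\mathbb{R}^d:\widehat{\mu}(\xi+k)=0\text{ for all }k\in\mathbb{Z}^d\}$. *)

theory Defs
  imports "HOL-Probability.Probability"
begin

definition spt :: "'a::topological_space measure \<Rightarrow> 'a set" where
  "spt M = \<Inter>{C. closed C \<and> emeasure M (space M - C) = 0}"

definition fourier :: "(real ^ 'n) measure \<Rightarrow> real ^ 'n \<Rightarrow> complex" where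
  "fourier M \<xi> = (LINT x|M. cis (- 2 * pi * (\<xi> \<bullet> x)))"

definition int_lattice :: "(real ^ 'n) set" where
  "int_lattice = {k. \<forall>i. k $ i \<in> \<int>}"

definition zero_set :: "(real ^ 'n) measure \<Rightarrow> (real ^ 'n) set" where
  "zero_set M = {\<xi>. \<forall>k \<in> int_lattice. fourier M (\<xi> + k) = 0}"

definition closed_unit_cube :: "(real ^ 'n) set" where
  "closed_unit_cube = {x. \<forall>i. 0 \<le> x $ i \<and> x $ i \<le> 1}"

definition open_unit_cube :: "(real ^ 'n) set" where
  "open_unit_cube = {x. \<forall>i. 0 < x $ i \<and> x $ i < 1}"

end

theory Submission
  imports Defs
begin

(* Fix \<xi> in the zero set. For a trigonometric polynomial q with integer frequencies,
  \<integral> e^(-2\<pi>i\<xi>x) q(x) d\<mu> is a combination of the values \<mu>^(\<xi> - k), k \<in> Z^d, hence 0.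
  A continuous G on the cube that vanishes on its boundary factors continuously through the torus
  embedding x \<mapsto> (cos 2\<pi>x, sin 2\<pi>x), so Stone-Weierstrass makes it a uniform limit of such q
  on the cube; since \<mu> lives on the cube, \<integral> e^(-2\<pi>i\<xi>x) G(x) d\<mu> = 0 as well. Taking
  G(x) = e^(2\<pi>i\<xi>x) g(x) with g the distance to the complement of (0,1)^d gives \<integral> g d\<mu> = 0,
  and g > 0 exactly on (0,1)^d, so \<mu>((0,1)^d) = 0. *)

lemma int_lattice_add: "k \<in> int_lattice \<Longrightarrow> m \<in> int_lattice \<Longrightarrow> k + m \<in> int_lattice"
  by (auto simp: int_lattice_def)

lemma int_lattice_uminus: "k \<in> int_lattice \<Longrightarrow> - k \<in> int_lattice"
  by (auto simp: int_lattice_def)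

lemma zero_in_int_lattice: "0 \<in> int_lattice"
  by (auto simp: int_lattice_def)

lemma axis_in_int_lattice: "axis j 1 \<in> int_lattice"
  by (auto simp: int_lattice_def axis_def)

inductive trig_poly :: "(real ^ 'n \<Rightarrow> complex) \<Rightarrow> bool" where
  zero: "trig_poly (\<lambda>x. 0)"
| add_monomial: "trig_poly q \<Longrightarrow> k \<in> int_lattice \<Longrightarrow>
    trig_poly (\<lambda>x. q x + c * cis (2 * pi * (k \<bullet> x)))"

lemma trig_poly_monomial: "k \<in> int_lattice \<Longrightarrow> trig_poly (\<lambda>x. c * cis (2 * pi * (k \<bullet> x)))"
  using trig_poly.add_monomial[OF trig_poly.zero] by simp

lemma trig_poly_const: "trig_poly (\<lambda>x. c)"
  using trig_poly_monomial[OF zero_in_int_lattice, of c] by simp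

lemma trig_poly_add:
  assumes "trig_poly q" "trig_poly r"
  shows "trig_poly (\<lambda>x. q x + r x)"
  using assms(2)
proof (induction r rule: trig_poly.induct)
  case zero
  show ?case using assms(1) by simp
next
  case (add_monomial r k c)
  then have "trig_poly (\<lambda>x. (q x + r x) + c * cis (2 * pi * (k \<bullet> x)))"
    using assms(1) by (intro trig_poly.add_monomial) auto
  then show ?case by (simp add: add.assoc)
qed

lemma trig_poly_mult_monomial:
  assumes "trig_poly q" "m \<in> int_lattice"
  shows "trig_poly (\<lambda>x. d * cis (2 * pi * (m \<bullet> x)) * q x)"
  using assms(1)
proof (induction q rule: trig_poly.induct)
  case zero
  then show ?case by (simp add: trig_poly.zero)
next
  case (add_monomial q k c)
  have "cis (2 * pi * (m \<bullet> x)) * cis (2 * pi * (k \<bullet> x)) = cis (2 * pi * ((m + k) \<bullet> x))" for x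
    by (simp add: inner_add_left distrib_left cis_mult)
  moreover have "trig_poly (\<lambda>x. d * cis (2 * pi * (m \<bullet> x)) * q x
      + (d * c) * cis (2 * pi * ((m + k) \<bullet> x)))"
    using add_monomial assms(2) by (intro trig_poly.add_monomial int_lattice_add) auto
  ultimately show ?case by (simp add: algebra_simps)
qed

lemma trig_poly_mult: "trig_poly q \<Longrightarrow> trig_poly r \<Longrightarrow> trig_poly (\<lambda>x. q x * r x)"
proof (induction q rule: trig_poly.induct)
  case zero
  then show ?case by (simp add: trig_poly.zero)
next
  case (add_monomial q k c)
  then have "trig_poly (\<lambda>x. q x * r x + c * cis (2 * pi * (k \<bullet> x)) * r x)"
    by (intro trig_poly_add trig_poly_mult_monomial)
  then show ?case by (simp add: algebra_simps)
qed

lemma trig_poly_sum: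
  "finite A \<Longrightarrow> (\<And>a. a \<in> A \<Longrightarrow> trig_poly (h a)) \<Longrightarrow> trig_poly (\<lambda>x. \<Sum>a\<in>A. h a x)"
  by (induction A rule: finite_induct) (simp_all add: trig_poly.zero trig_poly_add)

lemma trig_poly_continuous: "trig_poly q \<Longrightarrow> continuous_on UNIV q"
  by (induction q rule: trig_poly.induct) (auto intro!: continuous_intros)

lemma trig_poly_bounded: "trig_poly q \<Longrightarrow> \<exists>B. \<forall>x. norm (q x) \<le> B"
proof (induction q rule: trig_poly.induct)
  case zero
  then show ?case by auto
next
  case (add_monomial q k c)
  then obtain B where B: "\<forall>x. norm (q x) \<le> B" by auto
  have "norm (q x + c * cis (2 * pi * (k \<bullet> x))) \<le> norm (q x) + norm c" for x
    using norm_triangle_ineq[of "q x" "c * cis (2 * pi * (k \<bullet> x))"] by (simp add: norm_mult)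
  then have "norm (q x + c * cis (2 * pi * (k \<bullet> x))) \<le> B + norm c" for x
    using B by (smt (verit))
  then show ?case by blast
qed

definition torus_embedding :: "real ^ 'n \<Rightarrow> (real ^ 'n) \<times> (real ^ 'n)" where
  "torus_embedding x = ((\<chi> j. cos (2 * pi * x $ j)), (\<chi> j. sin (2 * pi * x $ j)))"

lemma continuous_on_torus_embedding: "continuous_on S torus_embedding"
  unfolding torus_embedding_def by (intro continuous_intros)

lemma trig_poly_cos_component: "trig_poly (\<lambda>x::real ^ 'n. complex_of_real (cos (2 * pi * x $ j)))"
proof -
  have "complex_of_real (cos (2 * pi * x $ j))
      = 1/2 * cis (2 * pi * (axis j 1 \<bullet> x)) + 1/2 * cis (2 * pi * ((- axis j 1) \<bullet> x))"
    for x :: "real ^ 'n"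
    by (simp add: complex_eq_iff inner_axis')
  then show ?thesis
    by (simp only:) (intro trig_poly_add trig_poly_monomial axis_in_int_lattice int_lattice_uminus)
qed

lemma trig_poly_sin_component: "trig_poly (\<lambda>x::real ^ 'n. complex_of_real (sin (2 * pi * x $ j)))"
proof -
  have "complex_of_real (sin (2 * pi * x $ j))
      = - \<i>/2 * cis (2 * pi * (axis j 1 \<bullet> x)) + \<i>/2 * cis (2 * pi * ((- axis j 1) \<bullet> x))"
    for x :: "real ^ 'n"
    by (simp add: complex_eq_iff inner_axis')
  then show ?thesis
    by (simp only:) (intro trig_poly_add trig_poly_monomial axis_in_int_lattice int_lattice_uminus)
qed

lemma trig_poly_torus_embedding_inner_Basis:
  assumes "b \<in> Basis"
  shows "trig_poly (\<lambda>x. complex_of_real (torus_embedding x \<bullet> b))"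
proof -
  from assms obtain j where "b = (axis j 1, 0) \<or> b = (0, axis j 1)"
    unfolding Basis_prod_def Basis_vec_def by auto
  then show ?thesis
    using trig_poly_cos_component[of j] trig_poly_sin_component[of j]
    by (auto simp: torus_embedding_def inner_axis)
qed

lemma trig_poly_real_polynomial_function:
  "real_polynomial_function p \<Longrightarrow> trig_poly (\<lambda>x. complex_of_real (p (torus_embedding x)))"
proof (induction p rule: real_polynomial_function.induct)
  case (linear f)
  have repr: "f y = (\<Sum>b\<in>Basis. (y \<bullet> b) * f b)" for y
    using Linear_Algebra.linear_componentwise[OF bounded_linear.linear[OF linear.hyps], of y 1] by simp
  have "complex_of_real (f (torus_embedding x))
      = (\<Sum>b\<in>Basis. complex_of_real (torus_embedding x \<bullet> b) * f b)" for x
    by (subst repr) (simp only: of_real_sum of_real_mult)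
  moreover have "trig_poly (\<lambda>x. \<Sum>b\<in>Basis. complex_of_real (torus_embedding x \<bullet> b) * f b)"
    by (intro trig_poly_sum trig_poly_mult trig_poly_torus_embedding_inner_Basis trig_poly_const) auto
  ultimately show ?case by simp
qed (simp_all add: trig_poly_const trig_poly_add trig_poly_mult)

lemma trig_poly_polynomial_function:
  fixes P :: "(real ^ 'n) \<times> (real ^ 'n) \<Rightarrow> complex"
  assumes "polynomial_function P"
  shows "trig_poly (\<lambda>x. P (torus_embedding x))"
proof -
  have "real_polynomial_function (Re \<circ> P)" "real_polynomial_function (Im \<circ> P)"
    using assms bounded_linear_Re bounded_linear_Im unfolding polynomial_function_def by auto
  then have "trig_poly (\<lambda>x. complex_of_real (Re (P (torus_embedding x)))
      + \<i> * complex_of_real (Im (P (torus_embedding x))))"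
    by (intro trig_poly_add trig_poly_mult trig_poly_const)
      (auto dest: trig_poly_real_polynomial_function)
  moreover have "complex_of_real (Re z) + \<i> * complex_of_real (Im z) = z" for z
    by (simp add: complex_eq_iff)
  ultimately show ?thesis by simp
qed

lemma torus_embedding_eq_imp_not_in_open_cube:
  assumes "x \<in> closed_unit_cube" "y \<in> closed_unit_cube"
    and "torus_embedding x = torus_embedding y" "x \<noteq> y"
  shows "x \<notin> open_unit_cube"
proof -
  obtain j where j: "x $ j \<noteq> y $ j" using assms(4) by (auto simp: vec_eq_iff)
  have "cos (2 * pi * x $ j) = cos (2 * pi * y $ j)" "sin (2 * pi * x $ j) = sin (2 * pi * y $ j)"
    using assms(3) by (auto simp: torus_embedding_def vec_eq_iff)
  then obtain n :: int where "2 * pi * x $ j = 2 * pi * y $ j + 2 * pi * n"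
    using sin_cos_eq_iff by metis
  then have "2 * pi * x $ j = 2 * pi * (y $ j + n)" by (simp add: distrib_left)
  then have n: "x $ j = y $ j + n" by simp
  have "0 \<le> x $ j" "x $ j \<le> 1" "0 \<le> y $ j" "y $ j \<le> 1"
    using assms(1,2) by (auto simp: closed_unit_cube_def)
  with j n have "\<not> (0 < x $ j \<and> x $ j < 1)" by (cases "n \<le> -1"; cases "n \<ge> 1") auto
  then show ?thesis unfolding open_unit_cube_def by blast
qed

lemma continuous_on_compact_factorization:
  fixes \<Phi> :: "'a::metric_space \<Rightarrow> 'b::metric_space" and G :: "'a \<Rightarrow> 'c::metric_space"
  assumes "compact C" "continuous_on C \<Phi>" "continuous_on C G"
    and "\<And>x y. x \<in> C \<Longrightarrow> y \<in> C \<Longrightarrow> \<Phi> x = \<Phi> y \<Longrightarrow> G x = G y"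
  obtains F where "continuous_on (\<Phi> ` C) F" "\<And>x. x \<in> C \<Longrightarrow> F (\<Phi> x) = G x"
proof
  define F where "F y = G (SOME x. x \<in> C \<and> \<Phi> x = y)" for y
  show F: "F (\<Phi> x) = G x" if "x \<in> C" for x
  proof -
    have "(SOME x'. x' \<in> C \<and> \<Phi> x' = \<Phi> x) \<in> C \<and> \<Phi> (SOME x'. x' \<in> C \<and> \<Phi> x' = \<Phi> x) = \<Phi> x"
      using someI[of "\<lambda>x'. x' \<in> C \<and> \<Phi> x' = \<Phi> x" x] that by blast
    then show ?thesis
      unfolding F_def using assms(4) that by blast
  qed
  have "quotient_map (top_of_set C) (top_of_set (\<Phi> ` C)) \<Phi>"
  proof (rule continuous_imp_quotient_map)
    show "continuous_map (top_of_set C) (top_of_set (\<Phi> ` C)) \<Phi>"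
      using assms(2) by (simp add: continuous_map_in_subtopology)
    show "compact_space (top_of_set C)"
      using assms(1) by (simp add: compact_space_subtopology)
  qed (simp_all add: Hausdorff_space_subtopology)
  moreover have "continuous_on C (F \<circ> \<Phi>)"
    using continuous_on_eq[OF assms(3)] F by simp
  ultimately show "continuous_on (\<Phi> ` C) F"
    by (metis continuous_compose_quotient_map continuous_map_iff_continuous)
qed

lemma closed_unit_cube_eq_cbox: "closed_unit_cube = cbox 0 1"
  by (auto simp: closed_unit_cube_def mem_box_cart)

lemma open_unit_cube_eq_box: "open_unit_cube = box 0 1"
  by (auto simp: open_unit_cube_def mem_box_cart)

lemma trig_poly_approx_vanishing_on_cube_boundary:
  fixes G :: "real ^ 'n \<Rightarrow> complex"
  assumes "continuous_on closed_unit_cube G"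
    and "\<And>x. x \<in> closed_unit_cube - open_unit_cube \<Longrightarrow> G x = 0"
    and "e > 0"
  obtains q where "trig_poly q" "\<And>x. x \<in> closed_unit_cube \<Longrightarrow> norm (G x - q x) < e"
proof -
  have cube: "compact closed_unit_cube"
    by (simp add: closed_unit_cube_eq_cbox)
  have "G x = G y"
    if "x \<in> closed_unit_cube" "y \<in> closed_unit_cube" "torus_embedding x = torus_embedding y" for x y
  proof (cases "x = y")
    case False
    then have "x \<notin> open_unit_cube" "y \<notin> open_unit_cube"
      using torus_embedding_eq_imp_not_in_open_cube[OF that False]
        torus_embedding_eq_imp_not_in_open_cube[of y x] that by auto
    then show ?thesis using assms(2) that(1,2) by auto
  qed simp
  then obtain F where F: "continuous_on (torus_embedding ` closed_unit_cube) F"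
    "\<And>x. x \<in> closed_unit_cube \<Longrightarrow> F (torus_embedding x) = G x"
    using continuous_on_compact_factorization[OF cube continuous_on_torus_embedding assms(1)] by blast
  have "compact (torus_embedding ` closed_unit_cube)"
    by (rule compact_continuous_image[OF continuous_on_torus_embedding cube])
  then obtain P where P: "polynomial_function P"
    "\<forall>y \<in> torus_embedding ` closed_unit_cube. norm (F y - P y) < e"
    using Stone_Weierstrass_polynomial_function[OF _ F(1) assms(3)] by blast
  show ?thesis
  proof (rule that[OF trig_poly_polynomial_function[OF P(1)]])
    fix x :: "real ^ 'n" assume "x \<in> closed_unit_cube"
    then show "norm (G x - P (torus_embedding x)) < e"
      using P(2) F(2)[of x] by auto
  qed
qed

lemma AE_in_spt:
  fixes \<mu> :: "'a::second_countable_topology measure"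
  assumes "sets \<mu> = sets borel"
  shows "AE x in \<mu>. x \<in> spt \<mu>"
proof -
  have space: "space \<mu> = UNIV" using sets_eq_imp_space_eq[OF assms] by simp
  \<comment> \<open>By Lindelof, countably many null open sets already cover the complement of the support.\<close>
  define \<F> where "\<F> = {V. open V \<and> emeasure \<mu> V = 0}"
  have "- spt \<mu> \<subseteq> \<Union>\<F>"
  proof
    fix x assume "x \<in> - spt \<mu>"
    then obtain K where "closed K" "emeasure \<mu> (space \<mu> - K) = 0" "x \<notin> K"
      unfolding spt_def by auto
    then show "x \<in> \<Union>\<F>"
      using space by (auto simp: \<F>_def Compl_eq_Diff_UNIV intro!: exI[of _ "- K"])
  qed
  moreover obtain \<F>' where \<F>': "\<F>' \<subseteq> \<F>" "countable \<F>'" "\<Union>\<F>' = \<Union>\<F>"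
    using Lindelof[of \<F>] unfolding \<F>_def by auto
  moreover have "(\<Union>V\<in>\<F>'. V) \<in> null_sets \<mu>"
  proof (rule null_sets_UN'[OF \<F>'(2)])
    fix V assume "V \<in> \<F>'"
    then have "open V" "emeasure \<mu> V = 0" using \<F>'(1) by (auto simp: \<F>_def)
    then show "V \<in> null_sets \<mu>" by (intro null_setsI) (simp_all add: assms)
  qed
  ultimately show ?thesis
    by (intro AE_I'[of "\<Union>\<F>'"]) auto
qed

lemma spt_disjoint_open_null:
  assumes "sets \<mu> = sets borel" "open U" "emeasure \<mu> U = 0"
  shows "spt \<mu> \<inter> U = {}"
proof -
  have "space \<mu> - (- U) = U" using sets_eq_imp_space_eq[OF assms(1)] by auto
  then have "spt \<mu> \<subseteq> - U"
    using assms(2,3) unfolding spt_def by (auto intro!: Inter_lower closed_Compl)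
  then show ?thesis by blast
qed

lemma borel_measurable_continuous_on_UNIV:
  assumes "sets M = sets borel" "continuous_on UNIV h"
  shows "h \<in> borel_measurable M"
  by (subst measurable_cong_sets[OF assms(1) refl]) (rule borel_measurable_continuous_onI[OF assms(2)])

lemma integrable_continuous_AE_compact:
  fixes h :: "'a::metric_space \<Rightarrow> 'b::{banach,second_countable_topology}"
  assumes "finite_measure M" "sets M = sets borel" "compact C" "AE x in M. x \<in> C"
    and "continuous_on UNIV h"
  shows "integrable M h"
proof -
  interpret finite_measure M by fact
  have "bounded (h ` C)"
    by (rule compact_imp_bounded[OF compact_continuous_image[OF continuous_on_subset[OF assms(5)] assms(3)]])
      simp
  then obtain B where B: "\<forall>x\<in>C. norm (h x) \<le> B"
    unfolding bounded_iff by blast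
  show ?thesis
  proof (rule integrable_const_bound[where B = B])
    show "AE x in M. norm (h x) \<le> B"
      using assms(4) by eventually_elim (simp add: B)
    show "h \<in> borel_measurable M"
      by (rule borel_measurable_continuous_on_UNIV[OF assms(2,5)])
  qed
qed

lemma integral_trig_poly_eq_0:
  assumes "finite_measure M" "sets M = sets borel" "\<xi> \<in> zero_set M" "trig_poly q"
  shows "(LINT x|M. cis (- 2 * pi * (\<xi> \<bullet> x)) * q x) = 0"
  using assms(4)
proof (induction q rule: trig_poly.induct)
  case zero
  then show ?case by simp
next
  case (add_monomial q k c)
  interpret finite_measure M by fact
  obtain B where "\<And>x. norm (q x) \<le> B"
    using trig_poly_bounded[OF add_monomial.hyps(1)] by auto
  then have q_int: "integrable M (\<lambda>x. cis (- 2 * pi * (\<xi> \<bullet> x)) * q x)"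
    using assms(2) trig_poly_continuous[OF add_monomial.hyps(1)]
    by (intro integrable_const_bound[where B = B] borel_measurable_continuous_on_UNIV)
      (auto intro!: continuous_intros simp: norm_mult)
  have monomial_int: "integrable M (\<lambda>x. c * cis (- 2 * pi * ((\<xi> - k) \<bullet> x)))"
    using assms(2)
    by (intro integrable_const_bound[where B = "norm c"] borel_measurable_continuous_on_UNIV)
      (auto intro!: continuous_intros simp: norm_mult)
  have "cis (- 2 * pi * (\<xi> \<bullet> x)) * cis (2 * pi * (k \<bullet> x)) = cis (- 2 * pi * ((\<xi> - k) \<bullet> x))" for x
    by (simp add: cis_mult inner_diff_left algebra_simps)
  then have "cis (- 2 * pi * (\<xi> \<bullet> x)) * (q x + c * cis (2 * pi * (k \<bullet> x)))
      = cis (- 2 * pi * (\<xi> \<bullet> x)) * q x + c * cis (- 2 * pi * ((\<xi> - k) \<bullet> x))" for x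
    by (simp add: algebra_simps)
  then have "(LINT x|M. cis (- 2 * pi * (\<xi> \<bullet> x)) * (q x + c * cis (2 * pi * (k \<bullet> x))))
      = (LINT x|M. cis (- 2 * pi * (\<xi> \<bullet> x)) * q x) + c * fourier M (\<xi> - k)"
    using Bochner_Integration.integral_add[OF q_int monomial_int] by (simp add: fourier_def)
  moreover have "fourier M (\<xi> - k) = 0"
    using assms(3) int_lattice_uminus[OF add_monomial.hyps(2)] by (auto simp: zero_set_def)
  ultimately show ?case using add_monomial.IH by simp
qed

lemma integral_vanishing_on_cube_boundary_eq_0:
  fixes G :: "real ^ 'n \<Rightarrow> complex"
  assumes "prob_space M" "sets M = sets borel" "AE x in M. x \<in> closed_unit_cube" "\<xi> \<in> zero_set M"
    and "continuous_on UNIV G" "\<And>x. x \<in> closed_unit_cube - open_unit_cube \<Longrightarrow> G x = 0"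
  shows "(LINT x|M. cis (- 2 * pi * (\<xi> \<bullet> x)) * G x) = 0"
proof -
  interpret prob_space M by fact
  let ?E = "\<lambda>x. cis (- 2 * pi * (\<xi> \<bullet> x))"
  have int: "integrable M (\<lambda>x. ?E x * h x)" if "continuous_on UNIV h" for h
  proof (rule integrable_continuous_AE_compact[OF finite_measure_axioms assms(2) _ assms(3)])
    show "compact (closed_unit_cube :: (real ^ 'n) set)"
      by (simp add: closed_unit_cube_eq_cbox)
    show "continuous_on UNIV (\<lambda>x. ?E x * h x)"
      by (intro continuous_intros that)
  qed
  have "norm (LINT x|M. ?E x * G x) \<le> e" if "e > 0" for e
  proof -
    obtain q where q: "trig_poly q" "\<And>x. x \<in> closed_unit_cube \<Longrightarrow> norm (G x - q x) < e"
      using trig_poly_approx_vanishing_on_cube_boundary[OF continuous_on_subset[OF assms(5)] assms(6) \<open>e > 0\<close>]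
      by blast
    have q_cont: "continuous_on UNIV q"
      by (rule trig_poly_continuous[OF q(1)])
    have diff_int: "integrable M (\<lambda>x. ?E x * (G x - q x))"
      by (rule int) (intro continuous_intros assms(5) q_cont)
    have "(LINT x|M. ?E x * G x) = (LINT x|M. ?E x * (G x - q x) + ?E x * q x)"
      by (simp add: algebra_simps)
    also have "\<dots> = (LINT x|M. ?E x * (G x - q x))"
      using Bochner_Integration.integral_add[OF diff_int int[OF q_cont]]
        integral_trig_poly_eq_0[OF finite_measure_axioms assms(2,4) q(1)] by simp
    also have "norm \<dots> \<le> (LINT x|M. norm (?E x * (G x - q x)))"
      by (rule integral_norm_bound)
    also have "\<dots> \<le> (LINT x|M. e)"
    proof (rule integral_mono_AE)
      show "integrable M (\<lambda>x. norm (?E x * (G x - q x)))"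
        by (rule integrable_norm[OF diff_int])
      show "AE x in M. norm (?E x * (G x - q x)) \<le> e"
        using assms(3) by eventually_elim (simp add: norm_mult less_imp_le q(2))
    qed simp
    finally show ?thesis by (simp add: prob_space)
  qed
  then show ?thesis
    using field_le_epsilon[of "norm (LINT x|M. ?E x * G x)" 0] by simp
qed

lemma integral_vanishing_off_open_cube_eq_0:
  fixes g :: "real ^ 'n \<Rightarrow> real"
  assumes "prob_space M" "sets M = sets borel" "AE x in M. x \<in> closed_unit_cube" "zero_set M \<noteq> {}"
    and "continuous_on UNIV g" "\<And>x. x \<notin> open_unit_cube \<Longrightarrow> g x = 0"
  shows "(LINT x|M. g x) = 0"
proof -
  obtain \<xi> where \<xi>: "\<xi> \<in> zero_set M" using assms(4) by blast
  have "cis (- 2 * pi * (\<xi> \<bullet> x)) * cis (2 * pi * (\<xi> \<bullet> x)) = 1" for x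
    by (simp add: cis_mult)
  then have "cis (- 2 * pi * (\<xi> \<bullet> x)) * (g x * cis (2 * pi * (\<xi> \<bullet> x))) = g x" for x
    by (metis mult.left_commute mult.right_neutral)
  moreover have "(LINT x|M. cis (- 2 * pi * (\<xi> \<bullet> x)) * (g x * cis (2 * pi * (\<xi> \<bullet> x)))) = 0"
  proof (rule integral_vanishing_on_cube_boundary_eq_0[OF assms(1-3) \<xi>])
    show "continuous_on UNIV (\<lambda>x. complex_of_real (g x) * cis (2 * pi * (\<xi> \<bullet> x)))"
      by (intro continuous_intros assms(5))
  qed (simp add: assms(6))
  ultimately have "(LINT x|M. complex_of_real (g x)) = 0"
    by (simp only:)
  then show ?thesis by simp
qed

lemma emeasure_eq_0_if_integral_eq_0:
  fixes g :: "'a \<Rightarrow> real"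
  assumes "integrable \<mu> g" "\<And>x. 0 \<le> g x" "\<And>x. x \<in> U \<Longrightarrow> 0 < g x" "U \<in> sets \<mu>"
    and "(LINT x|\<mu>. g x) = 0"
  shows "emeasure \<mu> U = 0"
proof -
  have "AE x in \<mu>. g x = 0"
    using integral_nonneg_eq_0_iff_AE[of \<mu> g] assms(1,2,5) by simp
  then have "AE x in \<mu>. x \<notin> U"
    by eventually_elim (metis assms(3) less_irrefl)
  moreover have "{x \<in> space \<mu>. \<not> x \<notin> U} = U"
    using sets.sets_into_space[OF assms(4)] by auto
  ultimately show ?thesis
    using AE_iff_measurable[OF assms(4)] by simp
qed

theorem corollary3p4:
  fixes \<mu> :: "(real ^ 'n) measure"
  assumes "prob_space \<mu>"
    and "sets \<mu> = sets borel"
    and "spt \<mu> \<subseteq> closed_unit_cube"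
    and "zero_set \<mu> \<noteq> {}"
  shows "spt \<mu> \<subseteq> closed_unit_cube - open_unit_cube"
proof -
  have cube: "AE x in \<mu>. x \<in> closed_unit_cube"
    using AE_in_spt[OF assms(2)] assms(3) by (auto elim: AE_mp)
  have U: "open open_unit_cube" "0 \<notin> open_unit_cube"
    by (auto simp: open_unit_cube_eq_box mem_box_cart)
  define g where "g x = infdist x (- open_unit_cube)" for x :: "real ^ 'n"
  have g_cont: "continuous_on UNIV g"
    unfolding g_def by (intro continuous_intros)
  have g_int: "integrable \<mu> g"
    by (rule integrable_continuous_AE_compact[OF prob_space.finite_measure[OF assms(1)] assms(2) _ cube g_cont])
      (simp add: closed_unit_cube_eq_cbox)
  have g_pos: "0 < g x" if "x \<in> open_unit_cube" for x
    unfolding g_def using U that by (intro infdist_pos_not_in_closed) auto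
  have "(LINT x|\<mu>. g x) = 0"
    using assms(1,2) cube assms(4) g_cont
    by (rule integral_vanishing_off_open_cube_eq_0) (simp add: g_def)
  moreover have "open_unit_cube \<in> sets \<mu>"
    using assms(2) borel_open[OF U(1)] by simp
  ultimately have "emeasure \<mu> open_unit_cube = 0"
    using emeasure_eq_0_if_integral_eq_0[OF g_int _ g_pos] by (simp add: g_def infdist_nonneg)
  then show ?thesis
    using spt_disjoint_open_null[OF assms(2) U(1)] assms(3) by blast
qed

end
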